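(* Let $K\ge 1$ be an integer and let $R_1,\dots,R_K>0$. Define $$g_K(R_1,\dots,R_K)=\frac{1}{2\pi \mathrm{i}}\int_{c-\mathrm{i}\infty}^{c+\mathrm{i}\infty}\frac{e^{s}}{s\prod_{k=1}^{K}\left(\frac{s}{R_k\ln 2}-1\right)}\,ds,$$ where $c>\max\{R_1\ln 2,\dots,R_K\ln 2\}$ (the value does not depend on the choice of such $c$). Then for every $t\in\{1,\dots,K\}$, with $R_1,\dots,R_{t-1},R_{t+1},\dots,R_K$ held fixed, the function $R_t\mapsto g_K(R_1,\dots,R_K)$ is increasing and convex on $(0,\infty)$. Consequently, the asymptotic outage probability $$p_{out\_asy,K}=\pi^K f_{\mathbf h}(\mathbf 0)\prod_{k=1}^K\frac{\mathcal N_0}{P_k}\, g_K(R_1,\dots,R_K)$$ is, for each $t$, an increasing and convex function of $R_t$ when the other rates are fixed.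
   Context: Here $\mathrm{i}=\sqrt{-1}$. In the asymptotic outage probability, $P_1,\dots,P_K>0$ are transmit powers, $\mathcal N_0>0$ is the noise power, and $f_{\mathbf h}(\mathbf 0)>0$ is the value at $\mathbf h=\mathbf 0$ of the joint density of a (Beckmann-distributed, i.e. possibly improper complex Gaussian) channel vector $\mathbf h=(h_1,\dots,h_K)$ with nonsingular covariance; $f_{\mathbf h}(\mathbf 0)$ is a positive constant not depending on $R_1,\dots,R_K$. The quantity $R_k$ is the transmission rate of the $k$-th HARQ round. *)

theory Defs
  imports "HOL-Analysis.Analysis"
begin

definition hK :: "nat \<Rightarrow> (nat \<Rightarrow> real) \<Rightarrow> complex \<Rightarrow> complex" where
  "hK K R s = exp s / (s * (\<Prod>k\<in>{1..K}. s / complex_of_real (R k * ln 2) - 1))"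

definition cK :: "nat \<Rightarrow> (nat \<Rightarrow> real) \<Rightarrow> real" where
  "cK K R = 1 + Max ((\<lambda>k. R k * ln 2) ` {1..K})"

text \<open>g_K = (1/(2 pi i)) \<integral>_{c - i\<infinity>}^{c + i\<infinity>} hK(s) ds, parametrised by s = c + i y,
  ds = i dy.  The integral is real; we take its real part to obtain a real function.\<close>
definition gK :: "nat \<Rightarrow> (nat \<Rightarrow> real) \<Rightarrow> real" where
  "gK K R = Re ((1 / (2 * complex_of_real pi * \<i>)) *
      integral UNIV (\<lambda>y::real. hK K R (Complex (cK K R) y) * \<i>))"

definition p_out_asy :: "nat \<Rightarrow> real \<Rightarrow> real \<Rightarrow> (nat \<Rightarrow> real) \<Rightarrow> (nat \<Rightarrow> real) \<Rightarrow> real" where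
  "p_out_asy K f0 N0 P R = pi ^ K * f0 * (\<Prod>k\<in>{1..K}. N0 / P k) * gK K R"

end

theory Submission
  imports Defs "HOL-Complex_Analysis.Complex_Analysis" "HOL-Probability.Sinc_Integral"
    "HOL-Real_Asymp.Real_Asymp"
begin

(* Writing a_k = R_k ln 2 and expanding 1/(s/a_k - 1) = sum_{j>=1} (a_k/s)^j turns the integrand
   of g_K into e^s/s * P(1/s), where P = prod_k sum_{j>=1} a_k^j z^j.  Integrating termwise along
   Re s = c with (1/(2 pi i)) int e^s s^-(n+1) ds = 1/n!  (the residue at 0; on a rectangle the
   three other sides contribute O(1/T)) gives g_K = sum_n P_n / n!.  Splitting off the factor of
   R_t, every P_n is a polynomial in R_t with nonnegative coefficients and no constant term, and
   some P_n has a positive linear coefficient.  So g_K is a convergent sum of nondecreasing convex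
   functions of R_t, one of them strictly increasing, and p_out_asy is a positive multiple of g_K. *)

section \<open>Integrals along a vertical line\<close>

lemma has_contour_integral_vertical_linepath:
  fixes f :: "complex \<Rightarrow> complex"
  assumes T: "T > 0"
  shows "(f has_contour_integral I) (linepath (Complex c (-T)) (Complex c T)) \<longleftrightarrow>
         ((\<lambda>y. f (Complex c y) * \<i>) has_integral I) {-T..T}"
proof -
  let ?F = "\<lambda>y. f (Complex c y) * \<i>"
  have "(?F has_integral I) (cbox (-T) T) \<longleftrightarrow>
        ((\<lambda>x. ?F ((2*T) *\<^sub>R x + (-T))) has_integral I /\<^sub>R (2*T) ^ DIM(real))
          (cbox ((-T - (-T)) /\<^sub>R (2*T)) ((T - (-T)) /\<^sub>R (2*T)))"
    by (rule has_integral_affinity_iff[symmetric]) (use T in simp)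
  also have "cbox ((-T - (-T)) /\<^sub>R (2*T)) ((T - (-T)) /\<^sub>R (2*T)) = {0..1::real}"
    using T by simp
  also have "((\<lambda>x. ?F ((2*T) *\<^sub>R x + (-T))) has_integral I /\<^sub>R (2*T) ^ DIM(real)) {0..1} \<longleftrightarrow>
     ((\<lambda>x. (2*T) *\<^sub>R ?F ((2*T) *\<^sub>R x + (-T))) has_integral I) {0..1}"
    using has_integral_cmul_iff[of "2*T" "\<lambda>x. ?F ((2*T) *\<^sub>R x + (-T))" "I /\<^sub>R (2*T)" "{0..1}"] T
    by (simp only: scaleR_scaleR power_one_right DIM_real) simp
  also have "(\<lambda>x. (2*T) *\<^sub>R ?F ((2*T) *\<^sub>R x + (-T))) =
      (\<lambda>x. f (linepath (Complex c (-T)) (Complex c T) x) * (Complex c T - Complex c (-T)))"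
  proof
    fix x :: real
    have "linepath (Complex c (-T)) (Complex c T) x = Complex c (2*T*x - T)"
      by (simp add: linepath_def complex_eq_iff algebra_simps scaleR_conv_of_real)
    moreover have "Complex c T - Complex c (-T) = of_real (2*T) * \<i>"
      by (simp add: complex_eq_iff)
    ultimately show "(2*T) *\<^sub>R ?F ((2*T) *\<^sub>R x + (-T)) =
      f (linepath (Complex c (-T)) (Complex c T) x) * (Complex c T - Complex c (-T))"
      by (simp add: scaleR_conv_of_real algebra_simps)
  qed
  finally show ?thesis
    by (simp add: has_contour_integral_linepath)
qed

lemma contour_integral_vertical_linepath:
  assumes "f contour_integrable_on linepath (Complex c (-T)) (Complex c T)" "T > 0"
  shows "contour_integral (linepath (Complex c (-T)) (Complex c T)) f
           = integral {-T..T} (\<lambda>y. f (Complex c y) * \<i>)"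
proof -
  have "((\<lambda>y. f (Complex c y) * \<i>) has_integral
          contour_integral (linepath (Complex c (-T)) (Complex c T)) f) {-T..T}"
    using has_contour_integral_integral[OF assms(1)] assms(2) has_contour_integral_vertical_linepath
    by blast
  then show ?thesis
    by (rule integral_unique[symmetric])
qed

lemma tendsto_integral_symmetric_interval:
  fixes f :: "real \<Rightarrow> 'a::euclidean_space"
  assumes f: "integrable lborel f"
  shows "((\<lambda>T. integral {-T..T} f) \<longlongrightarrow> (LINT y|lborel. f y)) at_top"
proof -
  have "((\<lambda>T. LINT y|lborel. indicator {-T..T} y *\<^sub>R f y) \<longlongrightarrow> (LINT y|lborel. f y)) at_top"
  proof (rule integral_dominated_convergence_at_top[where w = "\<lambda>y. norm (f y)"])
    show "AE y in lborel. ((\<lambda>T. indicator {-T..T} y *\<^sub>R f y) \<longlongrightarrow> f y) at_top"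
    proof (rule AE_I2)
      fix y :: real
      have "eventually (\<lambda>T. indicator {-T..T} y *\<^sub>R f y = f y) at_top"
        using eventually_ge_at_top[of "\<bar>y\<bar>"] by eventually_elim (auto simp: indicator_def)
      then show "((\<lambda>T. indicator {-T..T} y *\<^sub>R f y) \<longlongrightarrow> f y) at_top"
        by (rule tendsto_eventually)
    qed
  qed (use f in \<open>auto intro!: always_eventually simp: indicator_def\<close>)
  moreover have "(LINT y|lborel. indicator {-T..T} y *\<^sub>R f y) = integral {-T..T} f" for T
    using set_borel_integral_eq_integral(2)[of "{-T..T}" f] f
    by (simp add: set_integrable_def set_lebesgue_integral_def integrable_mult_indicator)
  ultimately show ?thesis
    by simp
qed

lemma integrable_inverse_sum_squares:
  fixes c :: real
  assumes "c \<noteq> 0"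
  shows "integrable lborel (\<lambda>y. inverse (c^2 + y^2))"
proof -
  have "integrable lborel (\<lambda>y. inverse (c^2) * inverse (1 + y^2))"
    using integrable_inverse_1_plus_square by (simp add: set_integrable_def einterval_def)
  moreover have "inverse (c^2 + (0 + c * y)^2) = inverse (c^2) * inverse (1 + y^2)" for y
    using assms by (simp add: field_simps)
  ultimately show ?thesis
    using lborel_integrable_real_affine_iff[OF assms, of "\<lambda>y. inverse (c^2 + y^2)" 0] by simp
qed

lemma integral_inverse_sum_squares:
  fixes c :: real
  assumes "c > 0"
  shows "(LINT y|lborel. inverse (c^2 + y^2)) = pi / c"
proof -
  have "(LINT y|lborel. inverse (1 + y^2)) = pi"
    using LBINT_inverse_1_plus_square
    by (simp add: interval_lebesgue_integral_def set_lebesgue_integral_def einterval_def)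
  moreover have "inverse (c^2 + (0 + c * y)^2) = inverse (c^2) * inverse (1 + y^2)" for y
    using assms by (simp add: field_simps)
  ultimately have "(LINT y|lborel. inverse (c^2 + (0 + c * y)^2)) = inverse (c^2) * pi"
    by simp
  moreover have "(LINT y|lborel. inverse (c^2 + y^2))
      = c * (LINT y|lborel. inverse (c^2 + (0 + c * y)^2))"
    using lborel_integral_real_affine[of c "\<lambda>y. inverse (c^2 + y^2)" 0] assms by simp
  ultimately show ?thesis
    using assms by (simp add: power2_eq_square field_simps)
qed

lemma norm_exp_div_power_vertical_le:
  assumes "c > 0" "n \<ge> 1"
  shows "norm (exp (Complex c y) / Complex c y ^ Suc n) \<le> exp c / c^(n-1) * inverse (c^2 + y^2)"
proof -
  let ?s = "Complex c y"
  have "c \<le> norm ?s"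
    using abs_Re_le_cmod[of ?s] assms by simp
  moreover have "norm ?s ^ 2 = c^2 + y^2"
    by (simp add: cmod_power2)
  ultimately have "c^(n-1) * (c^2 + y^2) \<le> norm ?s ^ (n-1) * norm ?s ^ 2"
    using assms by (simp add: mult_right_mono power_mono)
  also have "\<dots> = norm ?s ^ Suc n"
    using assms by (simp flip: power_add)
  finally have "exp c / norm ?s ^ Suc n \<le> exp c / (c^(n-1) * (c^2 + y^2))"
    using assms by (intro frac_le) (auto intro!: mult_pos_pos add_pos_nonneg)
  then show ?thesis
    by (simp add: norm_divide norm_power field_simps del: power_Suc)
qed

lemma integrable_exp_div_power_vertical:
  assumes "c > 0" "n \<ge> 1"
  shows "integrable lborel (\<lambda>y. exp (Complex c y) / Complex c y ^ Suc n)"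
proof (rule Bochner_Integration.integrable_bound)
  show "integrable lborel (\<lambda>y. exp c / c^(n-1) * inverse (c^2 + y^2))"
    using integrable_inverse_sum_squares[of c] assms by simp
  have "continuous_on UNIV (\<lambda>y. Complex c y)"
    unfolding Complex_eq by (intro continuous_intros)
  then have "continuous_on UNIV (\<lambda>y. exp (Complex c y) / Complex c y ^ Suc n)"
    using assms by (intro continuous_on_divide continuous_on_exp continuous_on_power)
      (auto simp: Complex_eq_0)
  then show "(\<lambda>y. exp (Complex c y) / Complex c y ^ Suc n) \<in> borel_measurable lborel"
    by (simp add: borel_measurable_continuous_onI)
  show "AE y in lborel. norm (exp (Complex c y) / Complex c y ^ Suc n)
          \<le> norm (exp c / c^(n-1) * inverse (c^2 + y^2))"
    using norm_exp_div_power_vertical_le[OF assms] assms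
    by (intro AE_I2) (simp add: abs_mult add_pos_nonneg)
qed

lemma integral_norm_exp_div_power_vertical_le:
  assumes "c > 0" "n \<ge> 1"
  shows "(LINT y|lborel. norm (exp (Complex c y) / Complex c y ^ Suc n)) \<le> pi * exp c / c^n"
proof -
  have "(LINT y|lborel. norm (exp (Complex c y) / Complex c y ^ Suc n))
      \<le> (LINT y|lborel. exp c / c^(n-1) * inverse (c^2 + y^2))"
    using assms integrable_exp_div_power_vertical integrable_inverse_sum_squares[of c]
      norm_exp_div_power_vertical_le
    by (intro integral_mono) auto
  also have "\<dots> = exp c / c^(n-1) * (pi / c)"
    using assms by (simp add: integral_inverse_sum_squares)
  also have "\<dots> = pi * exp c / c^n"
    using assms by (cases n) (auto simp: field_simps)
  finally show ?thesis .
qed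

lemma higher_deriv_exp: "(deriv ^^ n) (exp :: complex \<Rightarrow> complex) = exp"
  by (induction n) (auto intro!: DERIV_imp_deriv DERIV_exp)

lemma contour_integral_rectpath_exp_div_power:
  assumes "c > 0" "T > 0"
  shows "contour_integral (rectpath (Complex (-T) (-T)) (Complex c T)) (\<lambda>z. exp z / z ^ Suc n)
           = 2 * pi * \<i> / fact n"
proof -
  let ?g = "rectpath (Complex (-T) (-T)) (Complex c T)"
  let ?f = "\<lambda>z::complex. exp z / z ^ Suc n"
  have inside: "0 \<in> box (Complex (-T) (-T)) (Complex c T)"
    using assms by (simp add: in_box_complex_iff)
  then have "0 \<notin> path_image ?g"
    using assms by (simp add: path_image_rectpath_cbox_minus_box)
  then have "contour_integral ?g ?f = 2 * pi * \<i> * (\<Sum>p\<in>{0}. winding_number ?g p * residue ?f p)"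
    by (intro Residue_theorem[of UNIV]) (auto intro!: holomorphic_intros)
  moreover have "residue ?f 0 = 1 / fact n"
    using residue_holomorphic_over_power'[of UNIV exp n] holomorphic_on_exp
    by (simp add: higher_deriv_exp)
  ultimately show ?thesis
    using winding_number_rectpath[OF inside] by simp
qed

lemma norm_exp_div_power_le:
  fixes z :: complex
  assumes "n \<ge> 1" "Re z \<le> c" "1 \<le> r" "r \<le> norm z"
  shows "norm (exp z / z ^ Suc n) \<le> exp c / r^2"
proof -
  have "r^2 \<le> norm z ^ 2" using assms by (intro power_mono) auto
  also have "\<dots> \<le> norm z ^ Suc n" using assms by (intro power_increasing) auto
  finally have "r^2 \<le> norm z ^ Suc n" .
  moreover have "r^2 > 0" using assms by simp
  ultimately have "exp (Re z) / norm z ^ Suc n \<le> exp c / r^2"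
    using assms by (intro frac_le) auto
  then show ?thesis
    by (simp only: norm_divide norm_power norm_exp_eq_Re)
qed

lemma contour_integrable_exp_div_power_linepath:
  "0 \<notin> closed_segment p q \<Longrightarrow> (\<lambda>z. exp z / z ^ n) contour_integrable_on linepath p q"
  by (intro contour_integrable_continuous_linepath continuous_intros) auto

lemma norm_contour_integral_exp_div_power_linepath_le:
  assumes "n \<ge> 1" "1 \<le> T" and far: "\<And>z. z \<in> closed_segment p q \<Longrightarrow> Re z \<le> c \<and> T \<le> norm z"
  shows "norm (contour_integral (linepath p q) (\<lambda>z. exp z / z ^ Suc n)) \<le> exp c / T^2 * norm (q - p)"
proof (rule contour_integral_bound_linepath)
  show "(\<lambda>z. exp z / z ^ Suc n) contour_integrable_on linepath p q"
    using far assms(2) by (intro contour_integrable_exp_div_power_linepath) force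
  show "norm (exp z / z ^ Suc n) \<le> exp c / T^2" if "z \<in> closed_segment p q" for z
    using far[OF that] assms by (intro norm_exp_div_power_le) auto
qed simp

lemma contour_integral_rectpath:
  fixes a1 a3 :: complex
  defines "a2 \<equiv> Complex (Re a3) (Im a1)" and "a4 \<equiv> Complex (Re a1) (Im a3)"
  assumes "f contour_integrable_on linepath a1 a2" "f contour_integrable_on linepath a2 a3"
    "f contour_integrable_on linepath a3 a4" "f contour_integrable_on linepath a4 a1"
  shows "contour_integral (rectpath a1 a3) f = contour_integral (linepath a1 a2) f
      + contour_integral (linepath a2 a3) f + contour_integral (linepath a3 a4) f
      + contour_integral (linepath a4 a1) f"
  using assms by (simp add: rectpath_def Let_def contour_integrable_joinI)

lemma norm_vertical_integral_exp_div_power_diff_le: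
  assumes c: "c > 0" and n: "n \<ge> 1" and T: "T \<ge> 1"
  shows "norm (integral {-T..T} (\<lambda>y. exp (Complex c y) / Complex c y ^ Suc n * \<i>)
                - 2 * pi * \<i> / fact n) \<le> exp c * (4 * T + 2 * c) / T^2"
proof -
  define f where "f = (\<lambda>z::complex. exp z / z ^ Suc n)"
  define a1 a2 a3 a4 where "a1 = Complex (-T) (-T)" and "a2 = Complex c (-T)"
    and "a3 = Complex c T" and "a4 = Complex (-T) T"
  note corners = a1_def a2_def a3_def a4_def
  have far: "Re z \<le> c \<and> T \<le> norm z"
    if "z \<in> closed_segment a1 a2 \<union> closed_segment a3 a4 \<union> closed_segment a4 a1" for z
    using that c T abs_Im_le_cmod[of z] abs_Re_le_cmod[of z]
    by (auto simp: corners closed_segment_same_Re closed_segment_same_Im closed_segment_eq_real_ivl)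
  have "0 \<notin> closed_segment a2 a3"
    using c by (simp add: corners closed_segment_same_Re)
  moreover have "0 \<notin> closed_segment a1 a2 \<union> closed_segment a3 a4 \<union> closed_segment a4 a1"
    using far T by force
  ultimately have integrable: "f contour_integrable_on linepath p q"
    if "(p, q) \<in> {(a1, a2), (a2, a3), (a3, a4), (a4, a1)}" for p q
    unfolding f_def using that by (intro contour_integrable_exp_div_power_linepath) auto
  have "contour_integral (rectpath a1 a3) f = contour_integral (linepath a1 a2) f
      + contour_integral (linepath a2 a3) f + contour_integral (linepath a3 a4) f
      + contour_integral (linepath a4 a1) f"
    using contour_integral_rectpath[of f a1 a3] integrable by (simp add: corners)
  moreover have "contour_integral (rectpath a1 a3) f = 2 * pi * \<i> / fact n"
    unfolding f_def corners using c T by (intro contour_integral_rectpath_exp_div_power) auto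
  moreover have "contour_integral (linepath a2 a3) f = integral {-T..T} (\<lambda>y. f (Complex c y) * \<i>)"
    using integrable[of a2 a3] T unfolding a2_def a3_def by (intro contour_integral_vertical_linepath) auto
  ultimately have "integral {-T..T} (\<lambda>y. f (Complex c y) * \<i>) - 2 * pi * \<i> / fact n
      = - (contour_integral (linepath a1 a2) f + contour_integral (linepath a3 a4) f
           + contour_integral (linepath a4 a1) f)"
    by (simp add: algebra_simps)
  also have "norm \<dots> \<le> exp c / T^2 * norm (a2 - a1) + exp c / T^2 * norm (a4 - a3)
      + exp c / T^2 * norm (a1 - a4)"
    unfolding norm_minus_cancel f_def using far n T
    by (intro norm_triangle_le add_mono norm_triangle_ineq order_refl
        norm_contour_integral_exp_div_power_linepath_le) auto
  also have "\<dots> = exp c * (4 * T + 2 * c) / T^2"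
  proof -
    have "a1 - a4 = - (complex_of_real (2 * T) * \<i>)"
      by (simp add: corners complex_eq_iff)
    then have "norm (a1 - a4) = 2 * T"
      using T by (simp add: norm_mult)
    then show ?thesis
      using c T by (simp add: corners norm_complex_def field_simps)
  qed
  finally show ?thesis
    unfolding f_def .
qed

lemma integral_exp_div_power_vertical:
  assumes c: "c > 0" and n: "n \<ge> 1"
  shows "(LINT y|lborel. exp (Complex c y) / Complex c y ^ Suc n) = 2 * pi / fact n"
proof -
  define F where "F = (\<lambda>y. exp (Complex c y) / Complex c y ^ Suc n * \<i>)"
  have lim_diff: "((\<lambda>T. integral {-T..T} F - 2 * pi * \<i> / fact n) \<longlongrightarrow> 0) at_top"
  proof (rule Lim_null_comparison)
    show "\<forall>\<^sub>F T in at_top. norm (integral {-T..T} F - 2 * pi * \<i> / fact n)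
            \<le> exp c * (4 * T + 2 * c) / T^2"
      using eventually_ge_at_top[of 1] unfolding F_def
      by eventually_elim (rule norm_vertical_integral_exp_div_power_diff_le[OF c n])
    show "((\<lambda>T. exp c * (4 * T + 2 * c) / T^2) \<longlongrightarrow> 0) at_top"
      by real_asymp
  qed
  have "((\<lambda>T. integral {-T..T} F) \<longlongrightarrow> (LINT y|lborel. F y)) at_top"
    unfolding F_def
    by (intro tendsto_integral_symmetric_interval integrable_mult_left integrable_exp_div_power_vertical c n)
  moreover from lim_diff have "((\<lambda>T. integral {-T..T} F) \<longlongrightarrow> 2 * pi * \<i> / fact n) at_top"
    by (simp add: LIM_zero_iff)
  ultimately have "(LINT y|lborel. F y) = 2 * pi * \<i> / fact n"
    by (rule tendsto_unique[OF trivial_limit_at_top_linorder])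
  then show ?thesis
    unfolding F_def integral_mult_left_zero by (simp add: field_simps)
qed

section \<open>Power series in 1/s\<close>

(* The series of a z / (1 - a z); at z = 1/s it is the factor 1/(s/a - 1) of hK. *)
definition geom_tail_fps :: "'a::field \<Rightarrow> 'a fps" where
  "geom_tail_fps a = Abs_fps (\<lambda>j. if j = 0 then 0 else a ^ j)"

lemma geom_tail_fps_nth [simp]: "fps_nth (geom_tail_fps a) j = (if j = 0 then 0 else a ^ j)"
  by (simp add: geom_tail_fps_def)

lemma geom_tail_fps_sums:
  fixes a w :: "'a::{real_normed_field, banach}"
  assumes "norm (a * w) < 1"
  shows "(\<lambda>j. fps_nth (geom_tail_fps a) j * w ^ j) sums (a * w / (1 - a * w))"
proof -
  have "(\<lambda>j. (a * w) ^ j - (if j = 0 then 1 else 0)) sums (1 / (1 - a * w) - 1)"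
    using sums_diff[OF geometric_sums[OF assms] sums_single[of 0 "\<lambda>_. 1"]] by simp
  moreover have "(\<lambda>j. (a * w) ^ j - (if j = 0 then 1 else 0)) = (\<lambda>j. fps_nth (geom_tail_fps a) j * w ^ j)"
    by (auto simp: power_mult_distrib)
  moreover have "1 - a * w \<noteq> 0"
    using assms by auto
  then have "1 / (1 - a * w) - 1 = a * w / (1 - a * w)"
    by (simp add: field_simps)
  ultimately show ?thesis
    by simp
qed

lemma fps_conv_radius_geom_tail_fps:
  fixes a w :: "'a::{real_normed_field, banach}"
  assumes "norm (a * w) < 1"
  shows "ereal (norm w) < fps_conv_radius (geom_tail_fps a)"
proof (cases "a = 0")
  case True
  then have "geom_tail_fps a = 0"
    by (simp add: fps_eq_iff)
  then show ?thesis
    by simp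
next
  case False
  have "ereal (norm w) < ereal (1 / norm a)"
    using assms False by (simp add: norm_mult field_simps)
  also have "\<dots> \<le> fps_conv_radius (geom_tail_fps a)"
    unfolding fps_conv_radius_def
  proof (rule conv_radius_geI_ex')
    fix r :: real
    assume "0 < r" "ereal r < ereal (1 / norm a)"
    then have "norm (a * of_real r) < 1"
      using False by (simp add: norm_mult field_simps)
    then show "summable (\<lambda>j. fps_nth (geom_tail_fps a) j * of_real r ^ j)"
      by (rule sums_summable[OF geom_tail_fps_sums])
  qed
  finally show ?thesis .
qed

lemma eval_geom_tail_fps:
  fixes a w :: "'a::{real_normed_field, banach}"
  assumes "norm (a * w) < 1"
  shows "eval_fps (geom_tail_fps a) w = a * w / (1 - a * w)"
  using geom_tail_fps_sums[OF assms] by (simp add: eval_fps_def sums_iff)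

lemma fps_conv_radius_prod_gt:
  fixes f :: "'i \<Rightarrow> 'a::{real_normed_field, banach} fps"
  assumes "finite A" "\<And>k. k \<in> A \<Longrightarrow> ereal r < fps_conv_radius (f k)"
  shows "ereal r < fps_conv_radius (\<Prod>k\<in>A. f k)"
  using assms
proof (induction A rule: finite_induct)
  case (insert x F)
  then have "ereal r < min (fps_conv_radius (f x)) (fps_conv_radius (\<Prod>k\<in>F. f k))"
    by simp
  also have "\<dots> \<le> fps_conv_radius (f x * (\<Prod>k\<in>F. f k))"
    by (rule fps_conv_radius_mult)
  finally show ?case
    using insert by simp
qed simp

lemma eval_fps_prod:
  fixes f :: "'i \<Rightarrow> 'a::{real_normed_field, banach} fps"
  assumes "finite A" "\<And>k. k \<in> A \<Longrightarrow> ereal (norm z) < fps_conv_radius (f k)"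
  shows "eval_fps (\<Prod>k\<in>A. f k) z = (\<Prod>k\<in>A. eval_fps (f k) z)"
  using assms
  by (induction A rule: finite_induct) (simp_all add: eval_fps_mult fps_conv_radius_prod_gt)

lemma sum_in_nonneg_Reals:
  "(\<And>i. i \<in> I \<Longrightarrow> g i \<in> \<real>\<^sub>\<ge>\<^sub>0) \<Longrightarrow> (\<Sum>i\<in>I. g i) \<in> \<real>\<^sub>\<ge>\<^sub>0"
  by (induction I rule: infinite_finite_induct) auto

lemma fps_nth_prod_in_nonneg_Reals:
  fixes f :: "'i \<Rightarrow> 'a::{comm_ring_1, real_algebra_1} fps"
  assumes "\<And>k j. k \<in> A \<Longrightarrow> fps_nth (f k) j \<in> \<real>\<^sub>\<ge>\<^sub>0"
  shows "fps_nth (\<Prod>k\<in>A. f k) n \<in> \<real>\<^sub>\<ge>\<^sub>0"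
  using assms
proof (induction A arbitrary: n rule: infinite_finite_induct)
  case (insert x F)
  then show ?case
    by (auto simp: fps_mult_nth intro!: sum_in_nonneg_Reals)
qed auto

lemma fps_nth_times_exp_div_power_sums:
  fixes P :: "complex fps"
  assumes "s \<noteq> 0" and radius: "ereal (norm (1 / s)) < fps_conv_radius P"
  shows "(\<lambda>n. fps_nth P n * (exp s / s ^ Suc n)) sums (exp s / s * eval_fps P (1 / s))"
    and "summable (\<lambda>n. norm (fps_nth P n * (exp s / s ^ Suc n)))"
proof -
  have eq: "fps_nth P n * (1 / s) ^ n * (exp s / s) = fps_nth P n * (exp s / s ^ Suc n)" for n
    using assms(1) by (simp add: field_simps)
  show "(\<lambda>n. fps_nth P n * (exp s / s ^ Suc n)) sums (exp s / s * eval_fps P (1 / s))"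
    using sums_mult2[OF sums_eval_fps[OF radius], of "exp s / s"]
    unfolding eq by (simp add: mult.commute)
  show "summable (\<lambda>n. norm (fps_nth P n * (exp s / s ^ Suc n)))"
    using summable_mult2[OF norm_summable_fps[OF radius], of "norm (exp s / s)"]
    unfolding norm_mult[symmetric] eq .
qed

lemma summable_integral_norm_fps_terms_vertical:
  fixes P :: "complex fps"
  assumes c: "c > 0" and P0: "fps_nth P 0 = 0" and radius: "ereal (1 / c) < fps_conv_radius P"
  shows "summable (\<lambda>n. LINT y|lborel. norm (fps_nth P n * (exp (Complex c y) / Complex c y ^ Suc n)))"
proof (rule summable_comparison_test')
  have "ereal (norm (complex_of_real (1 / c))) < fps_conv_radius P"
    using radius c by (simp add: norm_divide)
  then show "summable (\<lambda>n. pi * exp c * norm (fps_nth P n * complex_of_real (1 / c) ^ n))"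
    by (intro summable_mult norm_summable_fps)
  fix n
  have "(LINT y|lborel. norm (fps_nth P n * (exp (Complex c y) / Complex c y ^ Suc n)))
      \<le> norm (fps_nth P n) * (pi * exp c / c ^ n)"
  proof (cases "n = 0")
    case False
    have "(LINT y|lborel. norm (fps_nth P n * (exp (Complex c y) / Complex c y ^ Suc n)))
        = norm (fps_nth P n) * (LINT y|lborel. norm (exp (Complex c y) / Complex c y ^ Suc n))"
      by (simp only: norm_mult integral_mult_right_zero)
    also have "\<dots> \<le> norm (fps_nth P n) * (pi * exp c / c ^ n)"
      using False c by (intro mult_left_mono integral_norm_exp_div_power_vertical_le) auto
    finally show ?thesis .
  qed (simp add: P0)
  moreover have "norm (fps_nth P n * complex_of_real (1 / c) ^ n) = norm (fps_nth P n) / c ^ n"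
    using c by (simp add: norm_mult norm_power norm_divide power_one_over)
  ultimately show "norm (LINT y|lborel. norm (fps_nth P n * (exp (Complex c y) / Complex c y ^ Suc n)))
      \<le> pi * exp c * norm (fps_nth P n * complex_of_real (1 / c) ^ n)"
    by (simp add: mult_ac)
qed

(* The hypothesis on the constant coefficient cannot be dropped: e^s/s is not absolutely integrable
   along the line. *)
lemma fps_nth_div_fact_sums_bromwich_integral:
  fixes P :: "complex fps"
  assumes c: "c > 0" and P0: "fps_nth P 0 = 0" and radius: "ereal (1 / c) < fps_conv_radius P"
  defines "h \<equiv> \<lambda>s. exp s / s * eval_fps P (1 / s)"
  shows "(\<lambda>n. fps_nth P n / fact n) sums (integral UNIV (\<lambda>y. h (Complex c y) * \<i>) / (2 * pi * \<i>))"
proof -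
  define u where "u = (\<lambda>n y. fps_nth P n * (exp (Complex c y) / Complex c y ^ Suc n))"
  have nonzero: "Complex c y \<noteq> 0" for y
    using c by (simp add: Complex_eq_0)
  have in_radius: "ereal (norm (1 / Complex c y)) < fps_conv_radius P" for y
  proof -
    have "norm (1 / Complex c y) \<le> 1 / c"
      using abs_Re_le_cmod[of "Complex c y"] c by (simp add: norm_divide frac_le)
    then have "ereal (norm (1 / Complex c y)) \<le> ereal (1 / c)"
      by simp
    then show ?thesis
      using radius by (rule le_less_trans)
  qed
  have u_integrable: "integrable lborel (u n)" for n
  proof (cases "n = 0")
    case False
    then show ?thesis
      unfolding u_def using c by (intro integrable_mult_right integrable_exp_div_power_vertical) auto
  qed (simp add: u_def P0)
  have u_integral: "(LINT y|lborel. u n y) = fps_nth P n * (2 * pi / fact n)" for n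
  proof (cases "n = 0")
    case False
    then show ?thesis
      unfolding u_def integral_mult_right_zero using c by (subst integral_exp_div_power_vertical) auto
  qed (simp add: u_def P0)
  have sum_eq: "(\<Sum>n. u n y) = h (Complex c y)" for y
    using fps_nth_times_exp_div_power_sums(1)[OF nonzero in_radius] by (simp add: u_def h_def sums_iff)
  have "summable (\<lambda>n. norm (u n y))" for y
    unfolding u_def by (rule fps_nth_times_exp_div_power_sums(2)[OF nonzero in_radius])
  moreover have "summable (\<lambda>n. LINT y|lborel. norm (u n y))"
    unfolding u_def by (rule summable_integral_norm_fps_terms_vertical[OF c P0 radius])
  ultimately have "integrable lborel (\<lambda>y. \<Sum>n. u n y)"
    and "(\<lambda>n. LINT y|lborel. u n y) sums (LINT y|lborel. (\<Sum>n. u n y))"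
    using u_integrable by (auto intro!: integrable_suminf sums_integral)
  then have integrable: "integrable lborel (\<lambda>y. h (Complex c y))"
    and sums: "(\<lambda>n. fps_nth P n * (2 * pi / fact n)) sums (LINT y|lborel. h (Complex c y))"
    by (simp_all add: sum_eq u_integral)
  have "integral UNIV (\<lambda>y. h (Complex c y) * \<i>) = (LINT y|lborel. h (Complex c y)) * \<i>"
    using integrable by (simp add: integral_lborel)
  then show ?thesis
    using sums_divide[OF sums, of "2 * pi"] by simp
qed

section \<open>The series of g_K\<close>

definition hK_fps :: "nat \<Rightarrow> (nat \<Rightarrow> real) \<Rightarrow> complex fps" where
  "hK_fps K R = (\<Prod>k\<in>{1..K}. geom_tail_fps (complex_of_real (R k * ln 2)))"

lemma fps_conv_radius_hK_fps:
  assumes "\<And>k. k \<in> {1..K} \<Longrightarrow> 0 < R k" "\<And>k. k \<in> {1..K} \<Longrightarrow> R k * ln 2 < r"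
  shows "ereal (1 / r) < fps_conv_radius (hK_fps K R)"
  unfolding hK_fps_def
proof (intro fps_conv_radius_prod_gt)
  fix k
  assume "k \<in> {1..K}"
  then have "0 < R k * ln 2" "R k * ln 2 < r"
    using assms by simp_all
  then have "norm (complex_of_real (R k * ln 2) * complex_of_real (1 / r)) < 1"
    by (simp add: norm_mult norm_divide del: of_real_mult)
  from fps_conv_radius_geom_tail_fps[OF this] \<open>0 < R k * ln 2\<close> \<open>R k * ln 2 < r\<close>
  show "ereal (1 / r) < fps_conv_radius (geom_tail_fps (complex_of_real (R k * ln 2)))"
    by (simp add: norm_divide)
qed simp

lemma hK_eq_eval_hK_fps:
  assumes R: "\<And>k. k \<in> {1..K} \<Longrightarrow> 0 < R k" and s: "\<And>k. k \<in> {1..K} \<Longrightarrow> R k * ln 2 < norm s"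
  shows "hK K R s = exp s / s * eval_fps (hK_fps K R) (1 / s)"
proof (cases "s = 0")
  case False
  define a where "a k = complex_of_real (R k * ln 2)" for k
  have small: "norm (a k * (1 / s)) < 1" if "k \<in> {1..K}" for k
    using s[OF that] R[OF that] False by (simp add: a_def norm_mult norm_divide field_simps)
  have factor: "1 / (s / a k - 1) = eval_fps (geom_tail_fps (a k)) (1 / s)" if "k \<in> {1..K}" for k
  proof -
    have "0 < norm (a k)" "norm (a k) < norm s"
      using s[OF that] R[OF that] by (simp_all add: a_def del: of_real_mult)
    then have "a k \<noteq> 0" "s \<noteq> a k"
      by auto
    then show ?thesis
      using False by (simp add: eval_geom_tail_fps[OF small[OF that]] field_simps)
  qed
  have "hK K R s = exp s / s * (1 / (\<Prod>k\<in>{1..K}. s / a k - 1))"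
    by (simp add: hK_def a_def)
  also have "1 / (\<Prod>k\<in>{1..K}. s / a k - 1) = (\<Prod>k\<in>{1..K}. 1 / (s / a k - 1))"
    by (simp add: prod_dividef)
  also have "\<dots> = (\<Prod>k\<in>{1..K}. eval_fps (geom_tail_fps (a k)) (1 / s))"
    using factor by (intro prod.cong) auto
  also have "\<dots> = eval_fps (hK_fps K R) (1 / s)"
    unfolding hK_fps_def a_def[symmetric]
    by (rule eval_fps_prod[symmetric]) (use fps_conv_radius_geom_tail_fps[OF small] in auto)
  finally show ?thesis .
qed (simp add: hK_def)

lemma hK_fps_nth_0:
  assumes "K \<ge> 1"
  shows "fps_nth (hK_fps K R) 0 = 0"
proof -
  have "1 \<in> {1..K}"
    using assms by simp
  then show ?thesis
    unfolding hK_fps_def prod.remove[OF finite_atLeastAtMost \<open>1 \<in> {1..K}\<close>] by simp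
qed

lemma less_cK:
  assumes "k \<in> {1..K}"
  shows "R k * ln 2 < cK K R"
proof -
  have "R k * ln 2 \<le> Max ((\<lambda>k. R k * ln 2) ` {1..K})"
    using assms by (intro Max_ge) auto
  then show ?thesis
    by (simp add: cK_def)
qed

lemma cK_pos:
  assumes "K \<ge> 1" "\<And>k. k \<in> {1..K} \<Longrightarrow> 0 < R k"
  shows "0 < cK K R"
proof -
  have "0 < R 1 * ln 2"
    using assms by simp
  also have "\<dots> < cK K R"
    using assms by (intro less_cK) simp
  finally show ?thesis .
qed

lemma gK_sums:
  assumes K: "K \<ge> 1" and R: "\<And>k. k \<in> {1..K} \<Longrightarrow> 0 < R k"
  shows "(\<lambda>n. Re (fps_nth (hK_fps K R) n) / fact n) sums gK K R"
proof -
  define c where "c = cK K R"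
  have c: "c > 0" and below_c: "\<And>k. k \<in> {1..K} \<Longrightarrow> R k * ln 2 < c"
    unfolding c_def using cK_pos[OF K R] less_cK by auto
  have "(\<lambda>n. fps_nth (hK_fps K R) n / fact n) sums
      (integral UNIV (\<lambda>y. exp (Complex c y) / Complex c y * eval_fps (hK_fps K R) (1 / Complex c y) * \<i>)
        / (2 * pi * \<i>))"
    using c K R below_c
    by (intro fps_nth_div_fact_sums_bromwich_integral fps_conv_radius_hK_fps) (auto simp: hK_fps_nth_0)
  also have "(\<lambda>y. exp (Complex c y) / Complex c y * eval_fps (hK_fps K R) (1 / Complex c y) * \<i>)
      = (\<lambda>y. hK K R (Complex c y) * \<i>)"
  proof
    fix y
    have "R k * ln 2 < norm (Complex c y)" if "k \<in> {1..K}" for k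
      using below_c[OF that] abs_Re_le_cmod[of "Complex c y"] by simp
    then show "exp (Complex c y) / Complex c y * eval_fps (hK_fps K R) (1 / Complex c y) * \<i>
        = hK K R (Complex c y) * \<i>"
      using R hK_eq_eval_hK_fps[of K R "Complex c y"] by simp
  qed
  finally have "(\<lambda>n. Re (fps_nth (hK_fps K R) n / fact n)) sums
      Re (integral UNIV (\<lambda>y. hK K R (Complex c y) * \<i>) / (2 * pi * \<i>))"
    by (rule sums_Re)
  moreover have "Re (z / fact n) = Re z / fact n" for z :: complex and n
    using Re_divide_of_nat[of z "fact n"] by simp
  ultimately show ?thesis
    by (simp add: gK_def c_def)
qed

section \<open>Convexity and monotonicity in one rate\<close>

lemma convex_on_suminf:
  fixes f :: "nat \<Rightarrow> 'a::real_vector \<Rightarrow> real"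
  assumes sums: "\<And>x. x \<in> A \<Longrightarrow> (\<lambda>n. f n x) sums g x" and convex: "\<And>n. convex_on A (f n)"
  shows "convex_on A g"
proof (rule convex_onI)
  show "convex A"
    using convex_on_imp_convex[OF convex] .
  fix t :: real and x y
  assume t: "0 < t" "t < 1" and xy: "x \<in> A" "y \<in> A"
  then have "(1 - t) *\<^sub>R x + t *\<^sub>R y \<in> A"
    using \<open>convex A\<close> by (simp add: convex_def)
  moreover have "(\<lambda>n. (1 - t) * f n x + t * f n y) sums ((1 - t) * g x + t * g y)"
    using xy by (intro sums_add sums_mult sums)
  moreover have "f n ((1 - t) *\<^sub>R x + t *\<^sub>R y) \<le> (1 - t) * f n x + t * f n y" for n
    using convex_onD[OF convex, of t x y] t xy by simp
  ultimately show "g ((1 - t) *\<^sub>R x + t *\<^sub>R y) \<le> (1 - t) * g x + t * g y"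
    by (intro sums_le[OF _ sums]) auto
qed

lemma strict_mono_on_suminf:
  fixes f :: "nat \<Rightarrow> 'a::order \<Rightarrow> real"
  assumes sums: "\<And>x. x \<in> A \<Longrightarrow> (\<lambda>n. f n x) sums g x"
    and mono: "\<And>n. mono_on A (f n)" and strict: "strict_mono_on A (f m)"
  shows "strict_mono_on A g"
proof (rule strict_mono_onI)
  fix x y
  assume xy: "x \<in> A" "y \<in> A" "x < y"
  have diff: "(\<lambda>n. f n y - f n x) sums (g y - g x)"
    using xy by (intro sums_diff sums)
  have "0 < (\<Sum>n. f n y - f n x)"
  proof (rule suminf_pos2)
    show "summable (\<lambda>n. f n y - f n x)"
      using diff by (rule sums_summable)
    show "0 \<le> f n y - f n x" for n
      using mono_onD[OF mono] xy by fastforce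
    show "0 < f m y - f m x"
      using strict_mono_onD[OF strict] xy by fastforce
  qed
  then show "g x < g y"
    using diff by (simp add: sums_iff)
qed

lemma convex_on_power_nonneg: "convex_on {0::real..} (\<lambda>x. x ^ n)"
  by (cases "even n") (auto intro: convex_on_subset[OF convex_power_even] convex_power_odd)

lemma convex_on_nonneg_power_sum:
  assumes "\<And>i. i \<in> I \<Longrightarrow> 0 \<le> a i"
  shows "convex_on {0::real..} (\<lambda>x. \<Sum>i\<in>I. a i * x ^ i)"
  using assms
proof (induction I rule: infinite_finite_induct)
  case (insert j I)
  then show ?case
    by (simp, intro convex_on_add convex_on_cmul convex_on_power_nonneg) auto
qed (simp_all add: convex_on_const)

lemma mono_on_nonneg_power_sum:
  assumes "\<And>i. i \<in> I \<Longrightarrow> 0 \<le> a i"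
  shows "mono_on {0::real..} (\<lambda>x. \<Sum>i\<in>I. a i * x ^ i)"
  using assms by (intro mono_onI sum_mono mult_left_mono power_mono) auto

lemma strict_mono_on_nonneg_power_sum:
  assumes "finite I" "1 \<in> I" "0 < a 1" "\<And>i. i \<in> I \<Longrightarrow> 0 \<le> a i"
  shows "strict_mono_on {0::real..} (\<lambda>x. \<Sum>i\<in>I. a i * x ^ i)"
proof (rule strict_mono_onI)
  fix x y :: real
  assume xy: "x \<in> {0..}" "y \<in> {0..}" "x < y"
  have split: "(\<Sum>i\<in>I. a i * z ^ i) = a 1 * z + (\<Sum>i\<in>I - {1}. a i * z ^ i)" for z :: real
    using assms by (simp add: sum.remove)
  have "a 1 * x < a 1 * y"
    using assms xy by simp
  moreover have "(\<Sum>i\<in>I - {1}. a i * x ^ i) \<le> (\<Sum>i\<in>I - {1}. a i * y ^ i)"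
    using mono_onD[OF mono_on_nonneg_power_sum[of "I - {1}" a]] assms xy by auto
  ultimately show "(\<Sum>i\<in>I. a i * x ^ i) < (\<Sum>i\<in>I. a i * y ^ i)"
    unfolding split by (rule add_less_le_mono)
qed

lemma fps_nth_geom_tail_fps_mult:
  "fps_nth (geom_tail_fps a * f) n = (\<Sum>i=1..n. a ^ i * fps_nth f (n - i))"
  by (simp add: fps_mult_nth sum.atLeast_Suc_atMost[of 0 n])

lemma hK_fps_fun_upd:
  assumes "t \<in> {1..K}"
  shows "hK_fps K (R(t := x)) = geom_tail_fps (complex_of_real (x * ln 2))
           * (\<Prod>k\<in>{1..K} - {t}. geom_tail_fps (complex_of_real (R k * ln 2)))"
proof -
  have "hK_fps K (R(t := x)) = geom_tail_fps (complex_of_real ((R(t := x)) t * ln 2))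
      * (\<Prod>k\<in>{1..K} - {t}. geom_tail_fps (complex_of_real ((R(t := x)) k * ln 2)))"
    unfolding hK_fps_def by (rule prod.remove[OF finite_atLeastAtMost assms])
  also have "(\<Prod>k\<in>{1..K} - {t}. geom_tail_fps (complex_of_real ((R(t := x)) k * ln 2)))
      = (\<Prod>k\<in>{1..K} - {t}. geom_tail_fps (complex_of_real (R k * ln 2)))"
    by (rule prod.cong) auto
  finally show ?thesis
    by (simp only: fun_upd_same)
qed

lemma fps_nth_prod_geom_tail_fps_in_nonneg_Reals:
  assumes "\<And>k. k \<in> A \<Longrightarrow> 0 \<le> a k"
  shows "fps_nth (\<Prod>k\<in>A. geom_tail_fps (complex_of_real (a k))) n \<in> \<real>\<^sub>\<ge>\<^sub>0"
  using assms by (intro fps_nth_prod_in_nonneg_Reals) (auto intro!: nonneg_Reals_pow_I)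

lemma prod_geom_tail_fps_nonzero:
  fixes a :: "'i \<Rightarrow> 'a::field"
  assumes "finite A" "\<And>k. k \<in> A \<Longrightarrow> a k \<noteq> 0"
  shows "(\<Prod>k\<in>A. geom_tail_fps (a k)) \<noteq> 0"
proof -
  have "geom_tail_fps (a k) \<noteq> 0" if "k \<in> A" for k
  proof
    assume "geom_tail_fps (a k) = 0"
    then have "fps_nth (geom_tail_fps (a k)) 1 = 0"
      by simp
    with assms(2)[OF that] show False
      by simp
  qed
  then show ?thesis
    using assms(1) by simp
qed

lemma gK_update_power_series:
  assumes K: "K \<ge> 1" and R: "\<And>k. k \<in> {1..K} \<Longrightarrow> 0 < R k" and t: "t \<in> {1..K}"
  obtains q :: "nat \<Rightarrow> real" and m0 where "\<And>m. 0 \<le> q m" "0 < q m0"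
    "\<And>x. 0 < x \<Longrightarrow> (\<lambda>n. \<Sum>i=1..n. q (n - i) * ln 2 ^ i / fact n * x ^ i) sums gK K (R(t := x))"
proof -
  define Q where "Q = (\<Prod>k\<in>{1..K} - {t}. geom_tail_fps (complex_of_real (R k * ln 2)))"
  define q where "q m = Re (fps_nth Q m)" for m
  have "fps_nth Q m \<in> \<real>\<^sub>\<ge>\<^sub>0" for m
    unfolding Q_def using R by (intro fps_nth_prod_geom_tail_fps_in_nonneg_Reals) (simp add: less_imp_le)
  then have Q_eq: "fps_nth Q m = complex_of_real (q m)" and q_nonneg: "0 \<le> q m" for m
    by (auto simp: q_def complex_nonneg_Reals_iff complex_eq_iff)
  have "complex_of_real (R k * ln 2) \<noteq> 0" if "k \<in> {1..K} - {t}" for k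
    using R[of k] that by auto
  then have "Q \<noteq> 0"
    unfolding Q_def by (intro prod_geom_tail_fps_nonzero) auto
  then obtain m0 where "fps_nth Q m0 \<noteq> 0"
    by (auto simp: fps_eq_iff)
  then have "0 < q m0"
    using Q_eq[of m0] q_nonneg[of m0] by (auto simp: less_le)
  moreover have "(\<lambda>n. \<Sum>i=1..n. q (n - i) * ln 2 ^ i / fact n * x ^ i) sums gK K (R(t := x))"
    if x: "0 < x" for x
  proof -
    have hK_update: "hK_fps K (R(t := x)) = geom_tail_fps (complex_of_real (x * ln 2)) * Q"
      unfolding Q_def by (rule hK_fps_fun_upd[OF t])
    have "Re (fps_nth (hK_fps K (R(t := x))) n) / fact n
        = (\<Sum>i=1..n. q (n - i) * ln 2 ^ i / fact n * x ^ i)" for n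
      unfolding hK_update fps_nth_geom_tail_fps_mult Q_eq
      by (simp add: sum_divide_distrib power_mult_distrib mult_ac flip: of_real_mult of_real_power)
    moreover have "(\<lambda>n. Re (fps_nth (hK_fps K (R(t := x))) n) / fact n) sums gK K (R(t := x))"
      using R x by (intro gK_sums K) auto
    ultimately show ?thesis
      by simp
  qed
  ultimately show thesis
    using q_nonneg by (intro that)
qed

lemma gK_update_strict_mono_convex:
  assumes K: "K \<ge> 1" and R: "\<And>k. k \<in> {1..K} \<Longrightarrow> 0 < R k" and t: "t \<in> {1..K}"
  shows "strict_mono_on {0<..} (\<lambda>x. gK K (R(t := x))) \<and> convex_on {0<..} (\<lambda>x. gK K (R(t := x)))"
proof -
  obtain q :: "nat \<Rightarrow> real" and m0 where q: "\<And>m. 0 \<le> q m" "0 < q m0"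
    and sums: "\<And>x. 0 < x \<Longrightarrow> (\<lambda>n. \<Sum>i=1..n. q (n - i) * ln 2 ^ i / fact n * x ^ i) sums gK K (R(t := x))"
    by (rule gK_update_power_series[OF K R t]) auto
  define f where "f n x = (\<Sum>i=1..n. q (n - i) * ln 2 ^ i / fact n * x ^ i)" for n and x :: real
  have coeffs_nonneg: "0 \<le> q (n - i) * ln 2 ^ i / fact n" for n i
    using q by simp
  have strict: "strict_mono_on {0<..} (f (Suc m0))"
    unfolding f_def using q coeffs_nonneg
    by (intro monotone_on_subset[OF strict_mono_on_nonneg_power_sum]) auto
  have mono: "mono_on {0<..} (f n)" for n
    unfolding f_def using coeffs_nonneg
    by (intro monotone_on_subset[OF mono_on_nonneg_power_sum]) auto
  have convex: "convex_on {0<..} (f n)" for n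
    unfolding f_def using coeffs_nonneg
    by (intro convex_on_subset[OF convex_on_nonneg_power_sum]) auto
  have f_sums: "(\<lambda>n. f n x) sums gK K (R(t := x))" if "x \<in> {0<..}" for x
    using sums that by (simp add: f_def)
  show ?thesis
    using strict_mono_on_suminf[OF f_sums mono strict] convex_on_suminf[OF f_sums convex] by blast
qed

theorem theorem1:
  fixes K :: nat and R P :: "nat \<Rightarrow> real" and N0 f0 :: real and t :: nat
  assumes "K \<ge> 1"
    and "\<And>k. k \<in> {1..K} \<Longrightarrow> R k > 0"
    and "\<And>k. k \<in> {1..K} \<Longrightarrow> P k > 0"
    and "N0 > 0" and "f0 > 0"
    and "t \<in> {1..K}"
  shows "strict_mono_on {0<..} (\<lambda>x. gK K (R(t := x)))
       \<and> convex_on {0<..} (\<lambda>x. gK K (R(t := x)))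
       \<and> strict_mono_on {0<..} (\<lambda>x. p_out_asy K f0 N0 P (R(t := x)))
       \<and> convex_on {0<..} (\<lambda>x. p_out_asy K f0 N0 P (R(t := x)))"
proof -
  have g: "strict_mono_on {0<..} (\<lambda>x. gK K (R(t := x))) \<and> convex_on {0<..} (\<lambda>x. gK K (R(t := x)))"
    using assms(1,2,6) by (rule gK_update_strict_mono_convex)
  define C where "C = pi ^ K * f0 * (\<Prod>k\<in>{1..K}. N0 / P k)"
  have "C > 0"
    unfolding C_def using assms(3-5) by (intro mult_pos_pos prod_pos) auto
  moreover have "(\<lambda>x. p_out_asy K f0 N0 P (R(t := x))) = (\<lambda>x. C * gK K (R(t := x)))"
    by (simp add: p_out_asy_def C_def)
  ultimately show ?thesis
    using g by (auto simp: monotone_on_def)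
qed

end
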